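(* Let $N\ge1$, $s\in(0,1)$. For $\lambda>-1$ let $$\mathcal L_\lambda(u)=\frac12\int_{\mathbb{R}^N}\big(|(-\Delta)^{s/2}u|^2+(\lambda+1)u^2\big)dx-\frac12\int_{\mathbb{R}^N}u^2\log u^2\,dx,\qquad \mathcal C_\lambda=\inf_{\varphi\in H^s(\mathbb{R}^N)\setminus\{0\}}\max_{t>0}\mathcal L_\lambda(t\varphi),$$ the least energy level of $(-\Delta)^s u+\lambda u=u\log|u|^2$ in $\mathbb{R}^N$. Then the map $\lambda\mapsto\mathcal C_\lambda$ from $(-1,+\infty)$ to $(0,+\infty)$ is continuous and increasing.
   Context: $\int|(-\Delta)^{s/2}u|^2:=\iint_{\mathbb{R}^{2N}}\frac{|u(x)-u(y)|^2}{|x-y|^{N+2s}}dxdy$; $(-\Delta)^s u(x)=2\,\mathrm{P.V.}\int\frac{u(x)-u(y)}{|x-y|^{N+2s}}dy$. It is used (from the literature) that $\mathcal C_\lambda>0$ and is attained by a least energy solution $U_\lambda$ with $\mathcal L_\lambda(U_\lambda)=\mathcal C_\lambda$. *)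

theory Defs
  imports "HOL-Analysis.Analysis"
begin

(* Gagliardo seminorm squared: \<integral>|(-\<Delta>)^{s/2}u|^2 := \<integral>\<integral> |u x - u y|^2 / |x-y|^(N+2s) dx dy,
   with N = DIM('a). *)
definition gagliardo :: "real \<Rightarrow> ('a::euclidean_space \<Rightarrow> real) \<Rightarrow> ennreal" where
  "gagliardo s u = (\<integral>\<^sup>+ x. (\<integral>\<^sup>+ y. ennreal ((u x - u y)^2 / norm (x - y) powr (real DIM('a) + 2 * s)) \<partial>lebesgue) \<partial>lebesgue)"

(* fractional Sobolev space H^s(R^N) (as a set of representatives) *)
definition Hs :: "real \<Rightarrow> ('a::euclidean_space \<Rightarrow> real) set" where
  "Hs s = {u. u \<in> borel_measurable lebesgue \<and>
              (\<integral>\<^sup>+ x. ennreal ((u x)^2) \<partial>lebesgue) < \<infinity> \<and> gagliardo s u < \<infinity>}"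

(* energy functional L_lam, with values in the extended reals; the log-term
   \<integral> u^2 log u^2 is split into its positive and negative parts *)
definition Lfun :: "real \<Rightarrow> real \<Rightarrow> ('a::euclidean_space \<Rightarrow> real) \<Rightarrow> ereal" where
  "Lfun s lam u =
     ereal (1/2) * (enn2ereal (gagliardo s u)
        + ereal (lam + 1) * enn2ereal (\<integral>\<^sup>+ x. ennreal ((u x)^2) \<partial>lebesgue))
     + ereal (1/2) * enn2ereal (\<integral>\<^sup>+ x. ennreal (- ((u x)^2 * ln ((u x)^2))) \<partial>lebesgue)
     - ereal (1/2) * enn2ereal (\<integral>\<^sup>+ x. ennreal ((u x)^2 * ln ((u x)^2)) \<partial>lebesgue)"

definition Clev :: "'a::euclidean_space itself \<Rightarrow> real \<Rightarrow> real \<Rightarrow> ereal" where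
  "Clev _ s lam = (INF \<phi> \<in> {\<phi> \<in> (Hs s :: ('a \<Rightarrow> real) set). \<not> (AE x in lebesgue. \<phi> x = 0)}.
                      SUP t \<in> {0<..}. Lfun s lam (\<lambda>x. t * \<phi> x))"

end

theory Submission
  imports Defs
begin

text \<open>Along a ray the energy is an explicit function of \<open>t\<close>:
  \<open>L\<^sub>\<lambda>(t \<phi>) = t\<^sup>2/2 (G + (\<lambda> + 1) B - I - B ln t\<^sup>2)\<close>, with \<open>G\<close> the Gagliardo seminorm of \<open>\<phi>\<close>,
  \<open>B = \<integral> \<phi>\<^sup>2\<close> and \<open>I = \<integral> \<phi>\<^sup>2 ln \<phi>\<^sup>2\<close>. Its supremum over \<open>t > 0\<close> is \<open>B/2 exp ((G - I)/B + \<lambda>)\<close>,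
  hence \<open>C\<^sub>\<lambda> = exp \<lambda> C\<^sub>0\<close>, and it remains to show \<open>0 < C\<^sub>0 < \<infinity>\<close>.

  Finiteness: the tent function \<open>max 0 (1 - |x|)\<close> is Lipschitz with bounded support, so its
  seminorm is controlled by the integral of the kernel \<open>min (|h|\<^sup>2, 1) / |h|^(N+2s)\<close>, which is
  finite by a dyadic decomposition.

  Positivity is a logarithmic Sobolev inequality \<open>I \<le> G + B (ln B + K)\<close>: averaging
  \<open>u(x)\<^sup>2 \<le> 2 (u(x) - u(y))\<^sup>2 + 2 u(y)\<^sup>2\<close> over \<open>y\<close> in a ball of radius \<open>r\<close> around \<open>x\<close> gives
  \<open>|B\<^sub>r| u(x)\<^sup>2 \<le> 2 r^(N+2s) g(x) + 2 B\<close>, where \<open>g\<close> is the inner integral of the seminorm, and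
  optimising in \<open>r\<close> yields \<open>u\<^sup>2 ln u\<^sup>2 \<le> g + u\<^sup>2 (ln B + K)\<close> pointwise.\<close>

section \<open>The Gagliardo density\<close>

lemma emeasure_lebesgue_ball:
  fixes c :: "'a::euclidean_space"
  assumes "r \<ge> 0"
  shows "emeasure lebesgue (ball c r) = ennreal (unit_ball_vol (DIM('a)) * r ^ DIM('a))"
  using emeasure_ball[OF assms, of c] by simp

lemma sigma_finite_lebesgue: "sigma_finite_measure (lebesgue :: 'a::euclidean_space measure)"
proof -
  obtain A :: "'a set set" where "countable A" "A \<subseteq> sets lborel" "\<Union>A = space lborel"
    "\<forall>a\<in>A. emeasure lborel a \<noteq> \<infinity>"
    using sigma_finite_measure.sigma_finite_countable[OF sigma_finite_lborel] by blast
  then show ?thesis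
    unfolding sigma_finite_measure_def by (intro exI[of _ A]) auto
qed

lemma borel_measurable_lebesgue_ident:
  "(\<lambda>x. x) \<in> borel_measurable (lebesgue :: 'a::euclidean_space measure)"
  by (rule measurable_completion) (simp add: measurable_ident_sets)

definition gagliardo_density :: "real \<Rightarrow> ('a::euclidean_space \<Rightarrow> real) \<Rightarrow> 'a \<Rightarrow> ennreal" where
  "gagliardo_density s u x =
     (\<integral>\<^sup>+ y. ennreal ((u x - u y)^2 / norm (x - y) powr (real DIM('a) + 2 * s)) \<partial>lebesgue)"

lemma gagliardo_eq_nn_integral_density:
  "gagliardo s u = (\<integral>\<^sup>+ x. gagliardo_density s u x \<partial>lebesgue)"
  unfolding gagliardo_def gagliardo_density_def ..

lemma borel_measurable_gagliardo_density:
  fixes u :: "'a::euclidean_space \<Rightarrow> real"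
  assumes [measurable]: "u \<in> borel_measurable lebesgue"
  shows "gagliardo_density s u \<in> borel_measurable lebesgue"
proof -
  have "(\<lambda>(x, y). ennreal ((u x - u y)^2 / norm (x - y) powr (real DIM('a) + 2 * s)))
          \<in> borel_measurable (lebesgue \<Otimes>\<^sub>M lebesgue)"
    using borel_measurable_lebesgue_ident by measurable
  then show ?thesis
    unfolding gagliardo_density_def
    by (rule sigma_finite_measure.borel_measurable_nn_integral[OF sigma_finite_lebesgue])
qed

lemma gagliardo_density_scale:
  fixes u :: "'a::euclidean_space \<Rightarrow> real"
  assumes [measurable]: "u \<in> borel_measurable lebesgue"
  shows "gagliardo_density s (\<lambda>x. t * u x) x = ennreal (t^2) * gagliardo_density s u x"
proof -
  have "gagliardo_density s (\<lambda>x. t * u x) x = (\<integral>\<^sup>+ y. ennreal (t^2) *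
          ennreal ((u x - u y)^2 / norm (x - y) powr (real DIM('a) + 2 * s)) \<partial>lebesgue)"
    unfolding gagliardo_density_def
    by (intro nn_integral_cong)
       (simp add: ennreal_mult[symmetric] power_mult_distrib right_diff_distrib[symmetric])
  also have "\<dots> = ennreal (t^2) * gagliardo_density s u x"
    unfolding gagliardo_density_def
    by (rule nn_integral_cmult) (use borel_measurable_lebesgue_ident in measurable)
  finally show ?thesis .
qed

lemma gagliardo_scale:
  fixes u :: "'a::euclidean_space \<Rightarrow> real"
  assumes "u \<in> borel_measurable lebesgue"
  shows "gagliardo s (\<lambda>x. t * u x) = ennreal (t^2) * gagliardo s u"
  unfolding gagliardo_eq_nn_integral_density gagliardo_density_scale[OF assms]
  using borel_measurable_gagliardo_density[OF assms] by (rule nn_integral_cmult)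

lemma nn_integral_square_scale:
  fixes u :: "'a::euclidean_space \<Rightarrow> real"
  assumes "u \<in> borel_measurable lebesgue"
  shows "(\<integral>\<^sup>+ x. ennreal ((t * u x)^2) \<partial>lebesgue)
           = ennreal (t^2) * (\<integral>\<^sup>+ x. ennreal ((u x)^2) \<partial>lebesgue)"
proof -
  have "(\<integral>\<^sup>+ x. ennreal ((t * u x)^2) \<partial>lebesgue)
          = (\<integral>\<^sup>+ x. ennreal (t^2) * ennreal ((u x)^2) \<partial>lebesgue)"
    by (intro nn_integral_cong) (simp add: ennreal_mult[symmetric] power_mult_distrib)
  also have "\<dots> = ennreal (t^2) * (\<integral>\<^sup>+ x. ennreal ((u x)^2) \<partial>lebesgue)"
    using assms by (intro nn_integral_cmult) measurable
  finally show ?thesis .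
qed

lemma nn_integral_square_mult_const:
  fixes u :: "'a::euclidean_space \<Rightarrow> real"
  assumes "u \<in> borel_measurable lebesgue" "c \<ge> 0" "B \<ge> 0"
    and "(\<integral>\<^sup>+ x. ennreal ((u x)^2) \<partial>lebesgue) = ennreal B"
  shows "(\<integral>\<^sup>+ x. ennreal ((u x)^2 * c) \<partial>lebesgue) = ennreal (B * c)"
proof -
  have "(\<integral>\<^sup>+ x. ennreal ((u x)^2 * c) \<partial>lebesgue)
          = (\<integral>\<^sup>+ x. ennreal ((u x)^2) * ennreal c \<partial>lebesgue)"
    using assms(2) by (intro nn_integral_cong) (simp add: ennreal_mult)
  also have "\<dots> = (\<integral>\<^sup>+ x. ennreal ((u x)^2) \<partial>lebesgue) * ennreal c"
    using assms(1) by (intro nn_integral_multc) measurable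
  finally show ?thesis using assms(2-4) by (simp add: ennreal_mult)
qed

section \<open>A logarithmic Sobolev inequality\<close>

lemma square_indicator_ball_le:
  fixes u :: "'a::real_normed_vector \<Rightarrow> real"
  assumes "0 \<le> p"
  shows "ennreal ((u x)^2) * indicator (ball x r) y
           \<le> 2 * ennreal (r powr p) * ennreal ((u x - u y)^2 / norm (x - y) powr p)
             + 2 * ennreal ((u y)^2)"
proof (cases "y \<in> ball x r")
  case True
  define q where "q = (u x - u y)^2 / norm (x - y) powr p"
  have "(u x - u y)^2 \<le> r powr p * q"
  proof (cases "x = y")
    case False
    have "(u x - u y)^2 * norm (x - y) powr p \<le> (u x - u y)^2 * r powr p"
      using True assms by (intro mult_left_mono powr_mono2) (auto simp: dist_norm)
    then show ?thesis using False by (simp add: q_def field_simps)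
  qed (simp add: q_def)
  moreover have "(u x)^2 \<le> 2 * (u x - u y)^2 + 2 * (u y)^2"
    using zero_le_power2[of "u x - 2 * u y"] by (simp add: power2_eq_square algebra_simps)
  ultimately have "ennreal ((u x)^2) \<le> ennreal (2 * (r powr p * q) + 2 * (u y)^2)"
    by (intro ennreal_leI) linarith
  also have "\<dots> = 2 * ennreal (r powr p) * ennreal q + 2 * ennreal ((u y)^2)"
    using divide_nonneg_nonneg[of "(u x - u y)^2" "norm (x - y) powr p"]
    by (simp add: q_def[symmetric] ennreal_mult' ennreal_mult mult.assoc)
  finally show ?thesis
    using True by (simp add: q_def)
qed simp

lemma ball_mass_le_gagliardo_density:
  fixes u :: "'a::euclidean_space \<Rightarrow> real"
  assumes u [measurable]: "u \<in> borel_measurable lebesgue" and r: "r > 0" and s: "s > 0"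
  shows "ennreal (unit_ball_vol DIM('a) * r ^ DIM('a) * (u x)^2)
           \<le> 2 * ennreal (r powr (real DIM('a) + 2 * s)) * gagliardo_density s u x
             + 2 * (\<integral>\<^sup>+ y. ennreal ((u y)^2) \<partial>lebesgue)"
proof -
  let ?p = "real DIM('a) + 2 * s"
  let ?q = "\<lambda>y. (u x - u y)^2 / norm (x - y) powr ?p"
  have "ennreal (unit_ball_vol DIM('a) * r ^ DIM('a) * (u x)^2)
          = ennreal ((u x)^2) * emeasure lebesgue (ball x r)"
    using r by (subst emeasure_lebesgue_ball) (auto simp: ennreal_mult'[symmetric] mult.commute)
  also have "\<dots> = (\<integral>\<^sup>+ y. ennreal ((u x)^2) * indicator (ball x r) y \<partial>lebesgue)"
    by (simp add: nn_integral_cmult_indicator)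
  also have "\<dots> \<le> (\<integral>\<^sup>+ y. 2 * ennreal (r powr ?p) * ennreal (?q y) + 2 * ennreal ((u y)^2) \<partial>lebesgue)"
    using s by (intro nn_integral_mono square_indicator_ball_le) simp
  also have "\<dots> = 2 * ennreal (r powr ?p) * gagliardo_density s u x
                   + 2 * (\<integral>\<^sup>+ y. ennreal ((u y)^2) \<partial>lebesgue)"
  proof -
    have [measurable]: "(\<lambda>y. ennreal (?q y)) \<in> borel_measurable lebesgue"
      using borel_measurable_lebesgue_ident by measurable
    have "(\<integral>\<^sup>+ y. 2 * ennreal (r powr ?p) * ennreal (?q y) + 2 * ennreal ((u y)^2) \<partial>lebesgue)
        = (\<integral>\<^sup>+ y. 2 * ennreal (r powr ?p) * ennreal (?q y) \<partial>lebesgue)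
          + (\<integral>\<^sup>+ y. 2 * ennreal ((u y)^2) \<partial>lebesgue)"
      by (rule nn_integral_add) measurable
    also have "(\<integral>\<^sup>+ y. 2 * ennreal (r powr ?p) * ennreal (?q y) \<partial>lebesgue)
        = 2 * ennreal (r powr ?p) * gagliardo_density s u x"
      unfolding gagliardo_density_def by (rule nn_integral_cmult) measurable
    also have "(\<integral>\<^sup>+ y. 2 * ennreal ((u y)^2) \<partial>lebesgue) = 2 * (\<integral>\<^sup>+ y. ennreal ((u y)^2) \<partial>lebesgue)"
      by (rule nn_integral_cmult) measurable
    finally show ?thesis .
  qed
  finally show ?thesis .
qed

lemma ln_le_mult_powr:
  fixes c \<theta> z :: real
  assumes "c > 0" "\<theta> > 0" "z > 0"
  shows "ln z \<le> c * z powr \<theta> - (1 + ln (c * \<theta>)) / \<theta>"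
proof -
  have "ln (c * \<theta> * z powr \<theta>) \<le> c * \<theta> * z powr \<theta> - 1"
    using assms by (intro ln_le_minus_one) simp
  moreover have "ln (c * \<theta> * z powr \<theta>) = ln (c * \<theta>) + \<theta> * ln z"
    using assms by (simp add: ln_mult)
  moreover have "\<theta> * (c * z powr \<theta> - (1 + ln (c * \<theta>)) / \<theta>) = c * \<theta> * z powr \<theta> - 1 - ln (c * \<theta>)"
    using assms by (simp add: field_simps)
  ultimately have "\<theta> * ln z \<le> \<theta> * (c * z powr \<theta> - (1 + ln (c * \<theta>)) / \<theta>)"
    by linarith
  then show ?thesis using assms by simp
qed

text \<open>The additive constant of \<open>ln_le_mult_powr\<close> for \<open>c = (\<omega> / 4) powr (1 + \<theta>)\<close>; the ball
  averaging produces it with \<open>\<omega> = |B\<^sub>1|\<close> and \<open>\<theta> = 2 s / N\<close>.\<close>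

definition log_sobolev_const :: "real \<Rightarrow> real \<Rightarrow> real" where
  "log_sobolev_const \<omega> \<theta> = - (1 + ln ((\<omega> / 4) powr (1 + \<theta>) * \<theta>)) / \<theta>"

lemma density_lower_bound_of_ball_bound:
  fixes n :: nat and \<omega> s B y G :: real
  assumes n: "n > 0" and \<omega>: "\<omega> > 0" and s: "s > 0" and B: "B > 0" and y: "y > 0"
    and H: "\<And>r. r > 0 \<Longrightarrow> \<omega> * r ^ n * y \<le> 2 * r powr (real n + 2 * s) * G + 2 * B"
  shows "B * (\<omega> / 4 * (y / B)) powr (1 + 2 * s / n) \<le> G"
proof -
  define \<theta> where "\<theta> = 2 * s / n"
  define a where "a = 4 * B / (\<omega> * y)"
  have a: "a > 0" using \<omega> y B by (simp add: a_def)
  define r where "r = a powr (1 / n)"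
  have r: "r > 0" using a by (simp add: r_def)
  have rn: "r ^ n = a"
    using a n by (simp add: r_def powr_realpow[symmetric] powr_powr)
  have rp: "r powr (real n + 2 * s) = a powr (1 + \<theta>)"
    using a n by (simp add: r_def powr_powr \<theta>_def field_simps)
  have "\<omega> * a * y = 4 * B" using \<omega> y by (simp add: a_def)
  with H[OF r] rn rp have "B \<le> a powr (1 + \<theta>) * G" by simp
  then have "B * (1 / a) powr (1 + \<theta>) \<le> a powr (1 + \<theta>) * (1 / a) powr (1 + \<theta>) * G"
    using a by (simp add: mult_right_mono mult.commute mult.left_commute)
  also have "a powr (1 + \<theta>) * (1 / a) powr (1 + \<theta>) = 1"
    using a by (simp add: powr_mult[symmetric])
  also have "1 / a = \<omega> / 4 * (y / B)"
    using B by (simp add: a_def)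
  finally show ?thesis by (simp add: \<theta>_def)
qed

lemma xlogx_le_of_ball_bound:
  fixes n :: nat and \<omega> s B y G :: real
  assumes n: "n > 0" and \<omega>: "\<omega> > 0" and s: "s > 0" and B: "B > 0" and y: "y \<ge> 0" and G: "G \<ge> 0"
    and H: "\<And>r. r > 0 \<Longrightarrow> \<omega> * r ^ n * y \<le> 2 * r powr (real n + 2 * s) * G + 2 * B"
  shows "y * ln y \<le> G + y * (ln B + log_sobolev_const \<omega> (2 * s / n))"
proof (cases "y = 0")
  case False
  with y have y: "y > 0" by simp
  define \<theta> where "\<theta> = 2 * s / n"
  define c where "c = (\<omega> / 4) powr (1 + \<theta>)"
  define z where "z = y / B"
  have \<theta>: "\<theta> > 0" using s n by (simp add: \<theta>_def)
  have z: "z > 0" using y B by (simp add: z_def)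
  have "y * ln y = y * ln B + y * ln z"
    using y B by (simp add: z_def ln_div algebra_simps)
  also have "y * ln z \<le> y * (c * z powr \<theta> - (1 + ln (c * \<theta>)) / \<theta>)"
    using ln_le_mult_powr[of c \<theta> z] \<omega> \<theta> z y by (intro mult_left_mono) (auto simp: c_def)
  also have "y * (c * z powr \<theta> - (1 + ln (c * \<theta>)) / \<theta>)
               = B * (\<omega> / 4 * z) powr (1 + \<theta>) + y * log_sobolev_const \<omega> \<theta>"
  proof -
    have "(\<omega> / 4 * z) powr (1 + \<theta>) = c * z powr (1 + \<theta>)"
      unfolding c_def by (rule powr_mult)
    also have "z powr (1 + \<theta>) = z * z powr \<theta>"
      using z by (simp add: powr_add)
    finally have "(\<omega> / 4 * z) powr (1 + \<theta>) = c * (z * z powr \<theta>)" .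
    moreover have "y = B * z" using B by (simp add: z_def)
    ultimately show ?thesis
      by (simp add: c_def log_sobolev_const_def algebra_simps flip: add_divide_distrib)
  qed
  also have "B * (\<omega> / 4 * z) powr (1 + \<theta>) \<le> G"
    unfolding z_def \<theta>_def by (rule density_lower_bound_of_ball_bound[OF n \<omega> s B y H])
  finally show ?thesis by (simp add: \<theta>_def algebra_simps)
qed (use G in simp)

text \<open>This is \<open>u\<^sup>2 ln u\<^sup>2 \<le> gagliardo_density s u x + u\<^sup>2 L\<close>, with every term moved to
  the side where it is nonnegative so that it can be integrated in \<open>ennreal\<close>.\<close>

lemma square_ln_square_le_gagliardo_density:
  fixes u :: "'a::euclidean_space \<Rightarrow> real" and s B :: real
  defines "L \<equiv> ln B + log_sobolev_const (unit_ball_vol DIM('a)) (2 * s / DIM('a))"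
  assumes u: "u \<in> borel_measurable lebesgue" and s: "s > 0" and B: "B > 0"
    and u_norm: "(\<integral>\<^sup>+ y. ennreal ((u y)^2) \<partial>lebesgue) = ennreal B"
  shows "ennreal ((u x)^2 * ln ((u x)^2)) + ennreal ((u x)^2 * max 0 (- L))
           \<le> gagliardo_density s u x + ennreal ((u x)^2 * max 0 L)
             + ennreal (- ((u x)^2 * ln ((u x)^2)))"
proof (cases "gagliardo_density s u x")
  case (real G)
  let ?y = "(u x)^2"
  have ball_bound: "unit_ball_vol DIM('a) * r ^ DIM('a) * ?y
                      \<le> 2 * r powr (real DIM('a) + 2 * s) * G + 2 * B" if r: "r > 0" for r
  proof -
    have "ennreal (unit_ball_vol DIM('a) * r ^ DIM('a) * ?y)
            \<le> ennreal (2 * r powr (real DIM('a) + 2 * s) * G + 2 * B)"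
      using ball_mass_le_gagliardo_density[OF u r s, of x] real B r
      by (simp add: u_norm ennreal_mult mult.assoc)
    then show ?thesis using real B r by (subst (asm) ennreal_le_iff) auto
  qed
  have "?y * ln ?y \<le> G + ?y * L"
    unfolding L_def by (rule xlogx_le_of_ball_bound[OF _ _ s B _ _ ball_bound]) (use real in auto)
  moreover have "?y * L = ?y * max 0 L - ?y * max 0 (- L)"
    by (simp add: max_def algebra_simps)
  ultimately have "max 0 (?y * ln ?y) + ?y * max 0 (- L) \<le> G + ?y * max 0 L + max 0 (- (?y * ln ?y))"
    using real by (simp add: max_def)
  then have "ennreal (max 0 (?y * ln ?y) + ?y * max 0 (- L))
               \<le> ennreal (G + ?y * max 0 L + max 0 (- (?y * ln ?y)))"
    by (rule ennreal_leI)
  moreover have pos_part: "ennreal t = ennreal (max 0 t)" for t :: real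
    by (cases "t \<ge> 0") (auto simp: ennreal_neg)
  ultimately show ?thesis
    using real by (subst (1 3) pos_part) simp
qed simp

lemma log_sobolev_inequality_nn:
  fixes u :: "'a::euclidean_space \<Rightarrow> real" and s B :: real
  defines "L \<equiv> ln B + log_sobolev_const (unit_ball_vol DIM('a)) (2 * s / DIM('a))"
  assumes u [measurable]: "u \<in> borel_measurable lebesgue" and s: "s > 0" and B: "B > 0"
    and u_norm: "(\<integral>\<^sup>+ y. ennreal ((u y)^2) \<partial>lebesgue) = ennreal B"
  shows "(\<integral>\<^sup>+ x. ennreal ((u x)^2 * ln ((u x)^2)) \<partial>lebesgue) + ennreal (B * max 0 (- L))
           \<le> gagliardo s u + ennreal (B * max 0 L)
             + (\<integral>\<^sup>+ x. ennreal (- ((u x)^2 * ln ((u x)^2))) \<partial>lebesgue)"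
proof -
  have mass: "(\<integral>\<^sup>+ x. ennreal ((u x)^2 * max 0 c) \<partial>lebesgue) = ennreal (B * max 0 c)" for c
    using nn_integral_square_mult_const[OF u _ _ u_norm] B by simp
  have [measurable]: "gagliardo_density s u \<in> borel_measurable lebesgue"
    by (rule borel_measurable_gagliardo_density[OF u])
  have "(\<integral>\<^sup>+ x. ennreal ((u x)^2 * ln ((u x)^2)) \<partial>lebesgue) + ennreal (B * max 0 (- L))
      = (\<integral>\<^sup>+ x. ennreal ((u x)^2 * ln ((u x)^2)) + ennreal ((u x)^2 * max 0 (- L)) \<partial>lebesgue)"
    by (subst nn_integral_add) (auto simp: mass)
  also have "\<dots> \<le> (\<integral>\<^sup>+ x. gagliardo_density s u x + ennreal ((u x)^2 * max 0 L)
                             + ennreal (- ((u x)^2 * ln ((u x)^2))) \<partial>lebesgue)"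
    unfolding L_def by (intro nn_integral_mono square_ln_square_le_gagliardo_density[OF u s B u_norm])
  also have "\<dots> = gagliardo s u + ennreal (B * max 0 L)
                   + (\<integral>\<^sup>+ x. ennreal (- ((u x)^2 * ln ((u x)^2))) \<partial>lebesgue)"
    by (simp add: nn_integral_add gagliardo_eq_nn_integral_density mass)
  finally show ?thesis .
qed

lemma integrable_square_ln_square:
  fixes u :: "'a::euclidean_space \<Rightarrow> real"
  assumes u: "u \<in> borel_measurable lebesgue" and s: "s > 0" and B: "B > 0"
    and u_norm: "(\<integral>\<^sup>+ y. ennreal ((u y)^2) \<partial>lebesgue) = ennreal B"
    and "gagliardo s u < \<infinity>"
    and "(\<integral>\<^sup>+ x. ennreal (- ((u x)^2 * ln ((u x)^2))) \<partial>lebesgue) < \<infinity>"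
  shows "integrable lebesgue (\<lambda>x. (u x)^2 * ln ((u x)^2))"
proof -
  let ?L = "ln B + log_sobolev_const (unit_ball_vol DIM('a)) (2 * s / DIM('a))"
  have "(\<integral>\<^sup>+ x. ennreal ((u x)^2 * ln ((u x)^2)) \<partial>lebesgue)
          \<le> (\<integral>\<^sup>+ x. ennreal ((u x)^2 * ln ((u x)^2)) \<partial>lebesgue) + ennreal (B * max 0 (- ?L))"
    by simp
  also have "\<dots> \<le> gagliardo s u + ennreal (B * max 0 ?L)
                   + (\<integral>\<^sup>+ x. ennreal (- ((u x)^2 * ln ((u x)^2))) \<partial>lebesgue)"
    by (rule log_sobolev_inequality_nn[OF u s B u_norm])
  also have "\<dots> < \<infinity>"
    using assms(5,6) by (simp add: less_top)
  finally have "(\<integral>\<^sup>+ x. ennreal ((u x)^2 * ln ((u x)^2)) \<partial>lebesgue) < \<infinity>" .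
  then show ?thesis
    using u assms(6) by (simp add: real_integrable_def less_top)
qed

lemma integrable_real_obtain_parts:
  fixes f :: "'b \<Rightarrow> real"
  assumes "integrable M f"
  obtains p n where "(\<integral>\<^sup>+ x. ennreal (f x) \<partial>M) = ennreal p" "p \<ge> 0"
    "(\<integral>\<^sup>+ x. ennreal (- f x) \<partial>M) = ennreal n" "n \<ge> 0" "(\<integral>x. f x \<partial>M) = p - n"
proof -
  obtain p where p: "(\<integral>\<^sup>+ x. ennreal (f x) \<partial>M) = ennreal p" "p \<ge> 0"
    using assms unfolding real_integrable_def by (cases "\<integral>\<^sup>+ x. ennreal (f x) \<partial>M") auto
  obtain n where n: "(\<integral>\<^sup>+ x. ennreal (- f x) \<partial>M) = ennreal n" "n \<ge> 0"
    using assms unfolding real_integrable_def by (cases "\<integral>\<^sup>+ x. ennreal (- f x) \<partial>M") auto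
  have "(\<integral>x. f x \<partial>M) = p - n"
    using real_lebesgue_integral_def[OF assms] p n by simp
  with p n that show ?thesis by blast
qed

lemma log_sobolev_inequality:
  fixes u :: "'a::euclidean_space \<Rightarrow> real"
  assumes u: "u \<in> borel_measurable lebesgue" and s: "s > 0" and B: "B > 0"
    and u_norm: "(\<integral>\<^sup>+ y. ennreal ((u y)^2) \<partial>lebesgue) = ennreal B"
    and G: "gagliardo s u = ennreal G" "G \<ge> 0"
    and int: "integrable lebesgue (\<lambda>x. (u x)^2 * ln ((u x)^2))"
  shows "(\<integral>x. (u x)^2 * ln ((u x)^2) \<partial>lebesgue)
           \<le> G + B * (ln B + log_sobolev_const (unit_ball_vol DIM('a)) (2 * s / DIM('a)))"
proof -
  let ?L = "ln B + log_sobolev_const (unit_ball_vol DIM('a)) (2 * s / DIM('a))"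
  obtain p n where p: "(\<integral>\<^sup>+ x. ennreal ((u x)^2 * ln ((u x)^2)) \<partial>lebesgue) = ennreal p" "p \<ge> 0"
    and n: "(\<integral>\<^sup>+ x. ennreal (- ((u x)^2 * ln ((u x)^2))) \<partial>lebesgue) = ennreal n" "n \<ge> 0"
    and I: "(\<integral>x. (u x)^2 * ln ((u x)^2) \<partial>lebesgue) = p - n"
    using integrable_real_obtain_parts[OF int] .
  have "ennreal (p + B * max 0 (- ?L)) \<le> ennreal (G + B * max 0 ?L + n)"
    using log_sobolev_inequality_nn[OF u s B u_norm] p n G B by simp
  then have "p + B * max 0 (- ?L) \<le> G + B * max 0 ?L + n"
    using p n G B by (subst (asm) ennreal_le_iff) auto
  moreover have "B * ?L = B * max 0 ?L - B * max 0 (- ?L)"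
    by (simp add: max_def algebra_simps)
  ultimately show ?thesis
    using I by linarith
qed

section \<open>The energy along rays\<close>

lemma Lfun_eq_integral:
  fixes u :: "'a::euclidean_space \<Rightarrow> real"
  assumes G: "gagliardo s u = ennreal G" "G \<ge> 0"
    and B: "(\<integral>\<^sup>+ x. ennreal ((u x)^2) \<partial>lebesgue) = ennreal B" "B \<ge> 0"
    and int: "integrable lebesgue (\<lambda>x. (u x)^2 * ln ((u x)^2))"
  shows "Lfun s lam u = ereal ((G + (lam + 1) * B - (\<integral>x. (u x)^2 * ln ((u x)^2) \<partial>lebesgue)) / 2)"
proof -
  obtain p n where "(\<integral>\<^sup>+ x. ennreal ((u x)^2 * ln ((u x)^2)) \<partial>lebesgue) = ennreal p" "p \<ge> 0"
    "(\<integral>\<^sup>+ x. ennreal (- ((u x)^2 * ln ((u x)^2))) \<partial>lebesgue) = ennreal n" "n \<ge> 0"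
    "(\<integral>x. (u x)^2 * ln ((u x)^2) \<partial>lebesgue) = p - n"
    using integrable_real_obtain_parts[OF int] .
  then show ?thesis
    unfolding Lfun_def using G B by (simp add: field_simps)
qed

lemma square_ln_square_scale:
  fixes t y :: real
  assumes "t > 0"
  shows "(t * y)^2 * ln ((t * y)^2) = t^2 * (y^2 * ln (y^2)) + t^2 * ln (t^2) * y^2"
proof (cases "y = 0")
  case False
  then have "ln ((t * y)^2) = ln (t^2) + ln (y^2)"
    using assms by (simp add: power_mult_distrib ln_mult)
  then show ?thesis by (simp add: algebra_simps)
qed simp

lemma Lfun_ray:
  fixes \<phi> :: "'a::euclidean_space \<Rightarrow> real"
  assumes \<phi> [measurable]: "\<phi> \<in> borel_measurable lebesgue"
    and G: "gagliardo s \<phi> = ennreal G" "G \<ge> 0"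
    and B: "(\<integral>\<^sup>+ x. ennreal ((\<phi> x)^2) \<partial>lebesgue) = ennreal B" "B \<ge> 0"
    and int: "integrable lebesgue (\<lambda>x. (\<phi> x)^2 * ln ((\<phi> x)^2))"
    and t: "t > 0"
  shows "Lfun s lam (\<lambda>x. t * \<phi> x)
           = ereal (t^2 / 2 * (G + (lam + 1) * B - (\<integral>x. (\<phi> x)^2 * ln ((\<phi> x)^2) \<partial>lebesgue)
                               - ln (t^2) * B))"
proof -
  have sq_int: "integrable lebesgue (\<lambda>x. (\<phi> x)^2)"
    using B by (intro integrableI_bounded) auto
  have sq_integral: "(\<integral>x. (\<phi> x)^2 \<partial>lebesgue) = B"
    using B by (subst integral_eq_nn_integral) auto
  let ?v = "\<lambda>x. t^2 * ((\<phi> x)^2 * ln ((\<phi> x)^2)) + t^2 * ln (t^2) * (\<phi> x)^2"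
  have v_int: "integrable lebesgue ?v"
    using int sq_int by (intro Bochner_Integration.integrable_add integrable_mult_right)
  have "Lfun s lam (\<lambda>x. t * \<phi> x)
          = ereal ((t^2 * G + (lam + 1) * (t^2 * B) - (\<integral>x. ?v x \<partial>lebesgue)) / 2)"
    using Lfun_eq_integral[of s "\<lambda>x. t * \<phi> x" "t^2 * G" "t^2 * B"] v_int G B
    by (simp add: gagliardo_scale nn_integral_square_scale ennreal_mult square_ln_square_scale[OF t])
  also have "(\<integral>x. ?v x \<partial>lebesgue)
               = t^2 * (\<integral>x. (\<phi> x)^2 * ln ((\<phi> x)^2) \<partial>lebesgue) + t^2 * ln (t^2) * B"
    using int sq_int sq_integral by simp
  finally show ?thesis
    by (simp add: field_simps)
qed

lemma SUP_ray_profile: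
  fixes a B :: real
  assumes B: "B > 0"
  shows "(SUP t\<in>{0<..}. ereal (t^2 / 2 * (a - ln (t^2) * B))) = ereal (B / 2 * exp (a / B - 1))"
proof (rule antisym)
  show "(SUP t\<in>{0<..}. ereal (t^2 / 2 * (a - ln (t^2) * B))) \<le> ereal (B / 2 * exp (a / B - 1))"
  proof (rule SUP_least)
    fix t :: real
    assume "t \<in> {0<..}"
    then have t: "t > 0" by simp
    define z where "z = a / B - 1 - ln (t^2)"
    have "t^2 / 2 * (a - ln (t^2) * B) = B / 2 * (t^2 * (1 + z))"
      using B by (simp add: z_def field_simps)
    also have "\<dots> \<le> B / 2 * (t^2 * exp z)"
      using exp_ge_add_one_self[of z] B by (intro mult_left_mono) auto
    also have "t^2 * exp z = exp (a / B - 1)"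
      using t by (simp add: z_def exp_diff)
    finally show "ereal (t^2 / 2 * (a - ln (t^2) * B)) \<le> ereal (B / 2 * exp (a / B - 1))"
      by simp
  qed
next
  define t\<^sub>0 where "t\<^sub>0 = exp ((a / B - 1) / 2)"
  have "t\<^sub>0^2 = exp (a / B - 1)"
    by (simp add: t\<^sub>0_def power2_eq_square exp_add[symmetric])
  then have "t\<^sub>0^2 / 2 * (a - ln (t\<^sub>0^2) * B) = B / 2 * exp (a / B - 1)"
    using B by (simp add: field_simps)
  moreover have "t\<^sub>0 > 0" by (simp add: t\<^sub>0_def)
  ultimately show "ereal (B / 2 * exp (a / B - 1)) \<le> (SUP t\<in>{0<..}. ereal (t^2 / 2 * (a - ln (t^2) * B)))"
    by (intro SUP_upper2[of t\<^sub>0]) auto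
qed

definition ray_sup :: "real \<Rightarrow> real \<Rightarrow> ('a::euclidean_space \<Rightarrow> real) \<Rightarrow> ereal" where
  "ray_sup s lam \<phi> = (SUP t\<in>{0<..}. Lfun s lam (\<lambda>x. t * \<phi> x))"

lemma ray_sup_eq:
  fixes \<phi> :: "'a::euclidean_space \<Rightarrow> real"
  assumes \<phi>: "\<phi> \<in> borel_measurable lebesgue"
    and G: "gagliardo s \<phi> = ennreal G" "G \<ge> 0"
    and B: "(\<integral>\<^sup>+ x. ennreal ((\<phi> x)^2) \<partial>lebesgue) = ennreal B" "B > 0"
    and int: "integrable lebesgue (\<lambda>x. (\<phi> x)^2 * ln ((\<phi> x)^2))"
  shows "ray_sup s lam \<phi> = ereal (B / 2 * exp ((G - (\<integral>x. (\<phi> x)^2 * ln ((\<phi> x)^2) \<partial>lebesgue)) / B + lam))"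
proof -
  let ?a = "G + (lam + 1) * B - (\<integral>x. (\<phi> x)^2 * ln ((\<phi> x)^2) \<partial>lebesgue)"
  have "ray_sup s lam \<phi> = (SUP t\<in>{0<..}. ereal (t^2 / 2 * (?a - ln (t^2) * B)))"
    unfolding ray_sup_def using Lfun_ray[OF \<phi> G B(1) _ int] B(2)
    by (intro SUP_cong) (auto simp: algebra_simps)
  also have "\<dots> = ereal (B / 2 * exp (?a / B - 1))"
    using B(2) by (rule SUP_ray_profile)
  also have "?a / B - 1 = (G - (\<integral>x. (\<phi> x)^2 * ln ((\<phi> x)^2) \<partial>lebesgue)) / B + lam"
    using B(2) by (simp add: field_simps)
  finally show ?thesis .
qed

lemma Hs_obtain_finite_energy:
  fixes \<phi> :: "'a::euclidean_space \<Rightarrow> real"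
  assumes s: "s > 0" and \<phi>: "\<phi> \<in> Hs s" and nonzero: "\<not> (AE x in lebesgue. \<phi> x = 0)"
    and entropy: "(\<integral>\<^sup>+ x. ennreal (- ((\<phi> x)^2 * ln ((\<phi> x)^2))) \<partial>lebesgue) < \<infinity>"
  obtains G B where "gagliardo s \<phi> = ennreal G" "G \<ge> 0"
    "(\<integral>\<^sup>+ x. ennreal ((\<phi> x)^2) \<partial>lebesgue) = ennreal B" "B > 0"
    "integrable lebesgue (\<lambda>x. (\<phi> x)^2 * ln ((\<phi> x)^2))"
proof -
  have meas [measurable]: "\<phi> \<in> borel_measurable lebesgue" and G_finite: "gagliardo s \<phi> < \<infinity>"
    and B_finite: "(\<integral>\<^sup>+ x. ennreal ((\<phi> x)^2) \<partial>lebesgue) < \<infinity>"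
    using \<phi> by (auto simp: Hs_def)
  then obtain G where G: "gagliardo s \<phi> = ennreal G" "G \<ge> 0"
    by (cases "gagliardo s \<phi>") auto
  have "(\<integral>\<^sup>+ x. ennreal ((\<phi> x)^2) \<partial>lebesgue) \<noteq> 0"
    using nonzero by (subst nn_integral_0_iff_AE) auto
  with B_finite obtain B where B: "(\<integral>\<^sup>+ x. ennreal ((\<phi> x)^2) \<partial>lebesgue) = ennreal B" "B > 0"
    by (cases "\<integral>\<^sup>+ x. ennreal ((\<phi> x)^2) \<partial>lebesgue") (auto simp: less_le)
  have "integrable lebesgue (\<lambda>x. (\<phi> x)^2 * ln ((\<phi> x)^2))"
    by (rule integrable_square_ln_square[OF meas s B(2,1) G_finite entropy])
  with G B that show ?thesis by blast
qed

lemma ray_sup_infinite: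
  fixes \<phi> :: "'a::euclidean_space \<Rightarrow> real"
  assumes \<phi>: "\<phi> \<in> Hs s"
    and "(\<integral>\<^sup>+ x. ennreal (- ((\<phi> x)^2 * ln ((\<phi> x)^2))) \<partial>lebesgue) = \<infinity>"
  shows "ray_sup s lam \<phi> = \<infinity>"
proof -
  have "Lfun s lam (\<lambda>x. 1 * \<phi> x) = \<infinity>"
    using assms by (auto simp: Lfun_def Hs_def less_top_ennreal)
  then have "\<infinity> \<le> ray_sup s lam \<phi>"
    unfolding ray_sup_def by (intro SUP_upper2[of 1]) auto
  then show ?thesis by (simp add: top_unique)
qed

lemma ray_sup_shift:
  fixes \<phi> :: "'a::euclidean_space \<Rightarrow> real"
  assumes s: "s > 0" and \<phi>: "\<phi> \<in> Hs s" and nonzero: "\<not> (AE x in lebesgue. \<phi> x = 0)"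
  shows "ray_sup s lam \<phi> = ereal (exp lam) * ray_sup s 0 \<phi>"
proof (cases "(\<integral>\<^sup>+ x. ennreal (- ((\<phi> x)^2 * ln ((\<phi> x)^2))) \<partial>lebesgue) = \<infinity>")
  case True
  then show ?thesis using ray_sup_infinite[OF \<phi> True] by simp
next
  case False
  then obtain G B where "gagliardo s \<phi> = ennreal G" "G \<ge> 0"
    "(\<integral>\<^sup>+ x. ennreal ((\<phi> x)^2) \<partial>lebesgue) = ennreal B" "B > 0"
    "integrable lebesgue (\<lambda>x. (\<phi> x)^2 * ln ((\<phi> x)^2))"
    using Hs_obtain_finite_energy[OF s \<phi> nonzero] by (auto simp: less_top)
  with \<phi> show ?thesis
    by (simp add: Hs_def ray_sup_eq exp_add)
qed

lemma ray_sup_lower_bound: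
  fixes \<phi> :: "'a::euclidean_space \<Rightarrow> real"
  assumes s: "s > 0" and \<phi>: "\<phi> \<in> Hs s" and nonzero: "\<not> (AE x in lebesgue. \<phi> x = 0)"
  shows "ereal (exp (- log_sobolev_const (unit_ball_vol DIM('a)) (2 * s / DIM('a))) / 2)
           \<le> ray_sup s 0 \<phi>"
proof (cases "(\<integral>\<^sup>+ x. ennreal (- ((\<phi> x)^2 * ln ((\<phi> x)^2))) \<partial>lebesgue) = \<infinity>")
  case True
  then show ?thesis using ray_sup_infinite[OF \<phi> True] by simp
next
  case False
  let ?K = "log_sobolev_const (unit_ball_vol DIM('a)) (2 * s / DIM('a))"
  let ?I = "\<integral>x. (\<phi> x)^2 * ln ((\<phi> x)^2) \<partial>lebesgue"
  obtain G B where G: "gagliardo s \<phi> = ennreal G" "G \<ge> 0"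
    and B: "(\<integral>\<^sup>+ x. ennreal ((\<phi> x)^2) \<partial>lebesgue) = ennreal B" "B > 0"
    and int: "integrable lebesgue (\<lambda>x. (\<phi> x)^2 * ln ((\<phi> x)^2))"
    using Hs_obtain_finite_energy[OF s \<phi> nonzero] False by (auto simp: less_top)
  have meas: "\<phi> \<in> borel_measurable lebesgue" using \<phi> by (simp add: Hs_def)
  have "- ln B - ?K \<le> (G - ?I) / B"
    using log_sobolev_inequality[OF meas s B(2,1) G int] B(2) by (simp add: field_simps)
  then have "B / 2 * exp (- ln B - ?K) \<le> B / 2 * exp ((G - ?I) / B)"
    using B(2) by simp
  moreover have "B / 2 * exp (- ln B - ?K) = exp (- ?K) / 2"
    using B(2) by (simp add: exp_diff exp_minus field_simps)
  ultimately show ?thesis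
    using ray_sup_eq[OF meas G B int, of 0] by simp
qed

lemma ray_sup_finite:
  fixes \<phi> :: "'a::euclidean_space \<Rightarrow> real"
  assumes s: "s > 0" and \<phi>: "\<phi> \<in> Hs s" and nonzero: "\<not> (AE x in lebesgue. \<phi> x = 0)"
    and entropy: "(\<integral>\<^sup>+ x. ennreal (- ((\<phi> x)^2 * ln ((\<phi> x)^2))) \<partial>lebesgue) < \<infinity>"
  shows "ray_sup s lam \<phi> < \<infinity>"
proof -
  obtain G B where "gagliardo s \<phi> = ennreal G" "G \<ge> 0"
    "(\<integral>\<^sup>+ x. ennreal ((\<phi> x)^2) \<partial>lebesgue) = ennreal B" "B > 0"
    "integrable lebesgue (\<lambda>x. (\<phi> x)^2 * ln ((\<phi> x)^2))"
    using Hs_obtain_finite_energy[OF s \<phi> nonzero entropy] .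
  with \<phi> show ?thesis
    by (simp add: Hs_def ray_sup_eq)
qed

section \<open>Integrability of the Gagliardo kernel\<close>

lemma dyadic_shell_le_one:
  fixes r :: real
  assumes "0 < r" "r \<le> 1"
  obtains k :: nat where "(1 / 2) ^ (k + 1) < r" "r \<le> (1 / 2) ^ k"
proof -
  define y where "y = log 2 (1 / r)"
  have y: "0 \<le> y" using assms by (simp add: y_def)
  define k where "k = nat \<lfloor>y\<rfloor>"
  have "(2::real) ^ k = 2 powr real k" by (simp add: powr_realpow)
  also have "\<dots> \<le> 2 powr y" using y by (intro powr_mono) (auto simp: k_def)
  also have "2 powr y = 1 / r" using assms by (simp add: y_def)
  finally have "r \<le> (1 / 2) ^ k" using assms by (simp add: field_simps)
  moreover have "1 / r < (2::real) ^ (k + 1)"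
  proof -
    have "1 / r = 2 powr y" using assms by (simp add: y_def)
    also have "\<dots> < 2 powr (real k + 1)" using y by (intro powr_less_mono) (auto simp: k_def)
    also have "\<dots> = 2 ^ (k + 1)" by (simp add: powr_add powr_realpow)
    finally show ?thesis .
  qed
  then have "(1 / 2) ^ (k + 1) < r" using assms by (simp add: field_simps)
  ultimately show ?thesis using that by blast
qed

lemma dyadic_shell_ge_one:
  fixes r :: real
  assumes "1 \<le> r"
  obtains k :: nat where "2 ^ k \<le> r" "r < 2 ^ (k + 1)"
proof -
  define y where "y = log 2 r"
  have y: "0 \<le> y" using assms by (simp add: y_def)
  define k where "k = nat \<lfloor>y\<rfloor>"
  have "(2::real) ^ k = 2 powr real k" by (simp add: powr_realpow)
  also have "\<dots> \<le> 2 powr y" using y by (intro powr_mono) (auto simp: k_def)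
  also have "2 powr y = r" using assms by (simp add: y_def)
  finally have "2 ^ k \<le> r" .
  moreover have "r < 2 ^ (k + 1)"
  proof -
    have "r = 2 powr y" using assms by (simp add: y_def)
    also have "\<dots> < 2 powr (real k + 1)" using y by (intro powr_less_mono) (auto simp: k_def)
    also have "\<dots> = 2 ^ (k + 1)" by (simp add: powr_add powr_realpow)
    finally show ?thesis .
  qed
  ultimately show ?thesis using that by blast
qed

lemma two_power_powr: "((2::real) ^ k) powr e = (2 powr e) ^ k"
proof -
  have "((2::real) ^ k) powr e = (2 powr real k) powr e" by (simp add: powr_realpow)
  also have "\<dots> = (2 powr e) powr real k" by (rule powr_powr_swap)
  also have "\<dots> = (2 powr e) ^ k" by (simp add: powr_realpow)
  finally show ?thesis .
qed

lemma half_power_powr: "((1 / 2 :: real) ^ k) powr e = (2 powr (- e)) ^ k"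
proof -
  have "((1 / 2 :: real) ^ k) powr e = 1 / (2 ^ k) powr e"
    by (simp add: power_one_over powr_divide)
  also have "\<dots> = (2 ^ k) powr (- e)"
    by (simp add: powr_minus_divide)
  finally show ?thesis by (simp only: two_power_powr)
qed

lemma ennreal_term_le_suminf: "(f :: nat \<Rightarrow> ennreal) n \<le> (\<Sum>j. f j)"
  using sum_le_suminf[of f "{n}"] by auto

lemma nn_integral_geometric_cballs_finite:
  fixes A q R \<rho> :: real
  assumes "A \<ge> 0" "q \<ge> 0" "R \<ge> 0" "\<rho> \<ge> 0" "q * \<rho> ^ DIM('a) < 1"
  shows "(\<integral>\<^sup>+ h. (\<Sum>j. ennreal (A * q ^ j) * indicator (cball (0::'a::euclidean_space) (R * \<rho> ^ j)) h)
            \<partial>lborel) < \<infinity>"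
proof -
  let ?c = "A * unit_ball_vol DIM('a) * R ^ DIM('a)"
  have "(\<integral>\<^sup>+ h. (\<Sum>j. ennreal (A * q ^ j) * indicator (cball (0::'a) (R * \<rho> ^ j)) h) \<partial>lborel)
          = (\<Sum>j. ennreal (A * q ^ j) * emeasure lborel (cball (0::'a) (R * \<rho> ^ j)))"
  proof -
    have [measurable]: "cball (0::'a) r \<in> sets borel" for r
      by (simp add: borel_closed)
    show ?thesis
      by (subst nn_integral_suminf) (measurable, simp add: nn_integral_cmult_indicator)
  qed
  also have "\<dots> = (\<Sum>j. ennreal (?c * (q * \<rho> ^ DIM('a)) ^ j))"
    using assms by (intro suminf_cong)
      (simp add: emeasure_cball ennreal_mult[symmetric] power_mult_distrib
         power_mult[symmetric] mult.commute mult.left_commute)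
  also have "\<dots> = ennreal (\<Sum>j. ?c * (q * \<rho> ^ DIM('a)) ^ j)"
    using assms by (intro suminf_ennreal2) auto
  finally show ?thesis by simp
qed

lemma powr_le_dyadic_bound:
  fixes r a :: real
  assumes k: "(1 / 2) ^ (k + 1) < r" "r \<le> (1 / 2) ^ k"
  shows "r powr a \<le> max 1 (2 powr (- a)) * (2 powr (- a)) ^ k"
proof (cases "a \<ge> 0")
  case True
  have "r powr a \<le> ((1 / 2) ^ k) powr a"
    using k True by (intro powr_mono2) (auto intro: less_trans[OF zero_less_power])
  also have "\<dots> \<le> max 1 (2 powr (- a)) * (2 powr (- a)) ^ k"
    using mult_right_mono[of 1 "max 1 (2 powr (- a))" "(2 powr (- a)) ^ k"]
    by (simp add: half_power_powr)
  finally show ?thesis .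
next
  case False
  have "r powr a \<le> ((1 / 2) ^ (k + 1)) powr a"
    using k False by (intro powr_mono2') auto
  also have "\<dots> = 2 powr (- a) * (2 powr (- a)) ^ k"
    unfolding half_power_powr by simp
  also have "\<dots> \<le> max 1 (2 powr (- a)) * (2 powr (- a)) ^ k"
    by (intro mult_right_mono) auto
  finally show ?thesis .
qed

lemma nn_integral_norm_powr_cball_finite:
  fixes a :: real
  assumes a: "a > - real DIM('a)"
  shows "(\<integral>\<^sup>+ h. ennreal (norm h powr a) * indicator (cball (0::'a::euclidean_space) 1) h \<partial>lborel) < \<infinity>"
proof -
  let ?q = "2 powr (- a)"
  let ?C = "max 1 ?q"
  have pointwise: "ennreal (norm h powr a) * indicator (cball 0 1) h
      \<le> (\<Sum>j. ennreal (?C * ?q ^ j) * indicator (cball (0::'a) (1 * (1 / 2) ^ j)) h)" for h :: 'a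
  proof (cases "h \<noteq> 0 \<and> norm h \<le> 1")
    case True
    then obtain k where k: "(1 / 2) ^ (k + 1) < norm h" "norm h \<le> (1 / 2) ^ k"
      using dyadic_shell_le_one[of "norm h"] by auto
    have "norm h powr a \<le> ?C * ?q ^ k"
      using k by (rule powr_le_dyadic_bound)
    then have "ennreal (norm h powr a) * indicator (cball 0 1) h
        \<le> ennreal (?C * ?q ^ k) * indicator (cball (0::'a) (1 * (1 / 2) ^ k)) h"
      using k by (simp add: ennreal_leI indicator_def)
    also have "\<dots> \<le> (\<Sum>j. ennreal (?C * ?q ^ j) * indicator (cball (0::'a) (1 * (1 / 2) ^ j)) h)"
      by (rule ennreal_term_le_suminf)
    finally show ?thesis .
  qed auto
  have "(\<integral>\<^sup>+ h. ennreal (norm h powr a) * indicator (cball (0::'a) 1) h \<partial>lborel)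
      \<le> (\<integral>\<^sup>+ h. (\<Sum>j. ennreal (?C * ?q ^ j) * indicator (cball (0::'a) (1 * (1 / 2) ^ j)) h) \<partial>lborel)"
    by (intro nn_integral_mono pointwise)
  also have "\<dots> < \<infinity>"
  proof (rule nn_integral_geometric_cballs_finite)
    have "?q * (1 / 2) ^ DIM('a) = 2 powr (- a) * 2 powr (- real DIM('a))"
      by (simp add: powr_minus_divide powr_realpow field_simps)
    also have "\<dots> = 2 powr (- a - real DIM('a))"
      by (simp add: powr_add[symmetric])
    also have "\<dots> < 2 powr 0" using a by (intro powr_less_mono) auto
    finally show "?q * (1 / 2) ^ DIM('a) < 1" by simp
  qed auto
  finally show ?thesis .
qed

lemma nn_integral_norm_powr_outside_ball_finite:
  fixes a :: real
  assumes a: "a < - real DIM('a)"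
  shows "(\<integral>\<^sup>+ h. ennreal (norm h powr a) * indicator (- ball (0::'a::euclidean_space) 1) h \<partial>lborel) < \<infinity>"
proof -
  let ?q = "2 powr a"
  have pointwise: "ennreal (norm h powr a) * indicator (- ball 0 1) h
      \<le> (\<Sum>j. ennreal (1 * ?q ^ j) * indicator (cball (0::'a) (2 * 2 ^ j)) h)" for h :: 'a
  proof (cases "norm h \<ge> 1")
    case True
    then obtain k where k: "2 ^ k \<le> norm h" "norm h < 2 ^ (k + 1)"
      using dyadic_shell_ge_one by blast
    have "norm h powr a \<le> (2 ^ k) powr a"
      using k a by (intro powr_mono2') auto
    then have "ennreal (norm h powr a) * indicator (- ball 0 1) h
        \<le> ennreal (1 * ?q ^ k) * indicator (cball (0::'a) (2 * 2 ^ k)) h"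
      using k by (simp add: ennreal_leI indicator_def two_power_powr)
    also have "\<dots> \<le> (\<Sum>j. ennreal (1 * ?q ^ j) * indicator (cball (0::'a) (2 * 2 ^ j)) h)"
      by (rule ennreal_term_le_suminf)
    finally show ?thesis .
  qed auto
  have "(\<integral>\<^sup>+ h. ennreal (norm h powr a) * indicator (- ball (0::'a) 1) h \<partial>lborel)
      \<le> (\<integral>\<^sup>+ h. (\<Sum>j. ennreal (1 * ?q ^ j) * indicator (cball (0::'a) (2 * 2 ^ j)) h) \<partial>lborel)"
    by (intro nn_integral_mono pointwise)
  also have "\<dots> < \<infinity>"
  proof (rule nn_integral_geometric_cballs_finite)
    have "?q * 2 ^ DIM('a) = 2 powr (a + real DIM('a))"
      by (simp add: powr_add powr_realpow)
    also have "\<dots> < 2 powr 0" using a by (intro powr_less_mono) auto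
    finally show "?q * 2 ^ DIM('a) < 1" by simp
  qed auto
  finally show ?thesis .
qed

lemma nn_integral_gagliardo_kernel_finite:
  fixes p :: real
  assumes "real DIM('a) < p" "p < real DIM('a) + 2"
  shows "(\<integral>\<^sup>+ h. ennreal (min ((norm h)^2) 1 / norm h powr p) \<partial>(lborel :: 'a::euclidean_space measure)) < \<infinity>"
proof -
  let ?near = "\<lambda>h::'a. ennreal (norm h powr (2 - p)) * indicator (cball 0 1) h"
  let ?far = "\<lambda>h::'a. ennreal (norm h powr (- p)) * indicator (- ball 0 1) h"
  have pointwise: "ennreal (min ((norm h)^2) 1 / norm h powr p) \<le> ?near h + ?far h" for h :: 'a
  proof (cases "norm h \<le> 1")
    case True
    have "min ((norm h)^2) 1 / norm h powr p = norm h powr 2 / norm h powr p"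
      using True by (simp add: power_le_one)
    also have "\<dots> = norm h powr (2 - p)"
      by (rule powr_diff[symmetric])
    finally have "min ((norm h)^2) 1 / norm h powr p = norm h powr (2 - p)" .
    then show ?thesis
      using True by (simp add: add_increasing2)
  next
    case False
    then have "min ((norm h)^2) 1 / norm h powr p = norm h powr (- p)"
      by (simp add: powr_minus_divide)
    then show ?thesis
      using False by (simp add: add_increasing)
  qed
  have [measurable]: "cball (0::'a) 1 \<in> sets borel" "ball (0::'a) 1 \<in> sets borel"
    by (simp_all add: borel_closed borel_open)
  have "(\<integral>\<^sup>+ h. ennreal (min ((norm h)^2) 1 / norm h powr p) \<partial>(lborel :: 'a measure))
          \<le> (\<integral>\<^sup>+ h. ?near h + ?far h \<partial>lborel)"
    by (intro nn_integral_mono pointwise)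
  also have "\<dots> = (\<integral>\<^sup>+ h. ?near h \<partial>lborel) + (\<integral>\<^sup>+ h. ?far h \<partial>lborel)"
    by (rule nn_integral_add) measurable
  also have "\<dots> < \<infinity>"
    using nn_integral_norm_powr_cball_finite[of "2 - p", where 'a='a]
      nn_integral_norm_powr_outside_ball_finite[of "- p", where 'a='a] assms
    by (simp add: less_top)
  finally show ?thesis .
qed

lemma nn_integral_lborel_translate:
  fixes K :: "'a::euclidean_space \<Rightarrow> ennreal"
  assumes [measurable]: "K \<in> borel_measurable borel"
  shows "(\<integral>\<^sup>+ y. K (x - y) \<partial>lborel) = (\<integral>\<^sup>+ h. K h \<partial>lborel)"
    and "(\<integral>\<^sup>+ x. K (x - y) \<partial>lborel) = (\<integral>\<^sup>+ h. K h \<partial>lborel)"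
proof -
  have affine: "(\<integral>\<^sup>+ h. K h \<partial>lborel) = (\<integral>\<^sup>+ z. K (t + c *\<^sub>R z) \<partial>lborel)"
    if "c = 1 \<or> c = -1" for t :: 'a and c :: real
    using that by (subst lborel_affine[of c t]) (auto simp: nn_integral_density nn_integral_distr)
  show "(\<integral>\<^sup>+ y. K (x - y) \<partial>lborel) = (\<integral>\<^sup>+ h. K h \<partial>lborel)"
    using affine[of "-1" x] by simp
  show "(\<integral>\<^sup>+ x. K (x - y) \<partial>lborel) = (\<integral>\<^sup>+ h. K h \<partial>lborel)"
    using affine[of 1 "- y"] by simp
qed

lemma nn_integral_indicator_kernel:
  fixes K :: "'a::euclidean_space \<Rightarrow> ennreal" and S :: "'a set"
  assumes [measurable]: "K \<in> borel_measurable borel" "S \<in> sets borel"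
  shows "(\<integral>\<^sup>+ x. (\<integral>\<^sup>+ y. indicator S x * K (x - y) + indicator S y * K (x - y) \<partial>lborel) \<partial>lborel)
           = 2 * emeasure lborel S * (\<integral>\<^sup>+ h. K h \<partial>lborel)"
proof -
  let ?J = "\<integral>\<^sup>+ h. K h \<partial>lborel"
  have inner: "(\<integral>\<^sup>+ y. indicator S x * K (x - y) + indicator S y * K (x - y) \<partial>lborel)
                 = indicator S x * ?J + (\<integral>\<^sup>+ y. indicator S y * K (x - y) \<partial>lborel)" for x
    by (subst nn_integral_add) (measurable, simp add: nn_integral_cmult nn_integral_lborel_translate)
  have swap: "(\<integral>\<^sup>+ x. (\<integral>\<^sup>+ y. indicator S y * K (x - y) \<partial>lborel) \<partial>lborel)
                = (\<integral>\<^sup>+ y. indicator S y * ?J \<partial>lborel)"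
  proof -
    have m: "(\<lambda>(x, y). indicator S y * K (x - y)) \<in> borel_measurable (lborel \<Otimes>\<^sub>M lborel)"
      by measurable
    have "(\<integral>\<^sup>+ x. (\<integral>\<^sup>+ y. indicator S y * K (x - y) \<partial>lborel) \<partial>lborel)
            = (\<integral>\<^sup>+ y. (\<integral>\<^sup>+ x. indicator S y * K (x - y) \<partial>lborel) \<partial>lborel)"
      using lborel_pair.Fubini'[OF m] by simp
    also have "\<dots> = (\<integral>\<^sup>+ y. indicator S y * ?J \<partial>lborel)"
      by (intro nn_integral_cong) (simp add: nn_integral_cmult nn_integral_lborel_translate)
    finally show ?thesis .
  qed
  have "(\<integral>\<^sup>+ x. (\<integral>\<^sup>+ y. indicator S x * K (x - y) + indicator S y * K (x - y) \<partial>lborel) \<partial>lborel)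
          = (\<integral>\<^sup>+ x. indicator S x * ?J \<partial>lborel)
            + (\<integral>\<^sup>+ x. (\<integral>\<^sup>+ y. indicator S y * K (x - y) \<partial>lborel) \<partial>lborel)"
    unfolding inner
    by (rule nn_integral_add) (auto intro: lborel.borel_measurable_nn_integral)
  also have "\<dots> = 2 * emeasure lborel S * ?J"
    unfolding swap by (simp add: nn_integral_multc mult_2 distrib_right)
  finally show ?thesis .
qed

lemma gagliardo_finite_if_lipschitz:
  fixes u :: "'a::euclidean_space \<Rightarrow> real" and S :: "'a set"
  assumes s: "0 < s" "s < 1" and S: "S \<in> sets borel" "emeasure lborel S < \<infinity>"
    and support: "\<And>x. x \<notin> S \<Longrightarrow> u x = 0"
    and lipschitz: "\<And>x y. \<bar>u x - u y\<bar> \<le> norm (x - y)"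
    and bounded: "\<And>x y. \<bar>u x - u y\<bar> \<le> 1"
  shows "gagliardo s u < \<infinity>"
proof -
  define p where "p = real DIM('a) + 2 * s"
  define K where "K h = ennreal (min ((norm h)^2) 1 / norm h powr p)" for h :: 'a
  have [measurable]: "K \<in> borel_measurable borel"
    unfolding K_def by measurable
  have pointwise: "ennreal ((u x - u y)^2 / norm (x - y) powr p)
                     \<le> indicator S x * K (x - y) + indicator S y * K (x - y)" for x y
  proof (cases "x \<in> S \<or> y \<in> S")
    case True
    have "(u x - u y)^2 \<le> (norm (x - y))^2" "(u x - u y)^2 \<le> 1"
      using power_mono[OF lipschitz[of x y], of 2] abs_square_le_1[THEN iffD2, OF bounded[of x y]]
      by simp_all
    then have "ennreal ((u x - u y)^2 / norm (x - y) powr p) \<le> K (x - y)"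
      unfolding K_def by (intro ennreal_leI divide_right_mono) auto
    then show ?thesis
      using True by (auto simp: indicator_def add_increasing add_increasing2)
  qed (simp add: support)
  have "gagliardo s u = (\<integral>\<^sup>+ x. (\<integral>\<^sup>+ y. ennreal ((u x - u y)^2 / norm (x - y) powr p) \<partial>lborel) \<partial>lborel)"
    unfolding gagliardo_def p_def nn_integral_completion ..
  also have "\<dots> \<le> (\<integral>\<^sup>+ x. (\<integral>\<^sup>+ y. indicator S x * K (x - y) + indicator S y * K (x - y) \<partial>lborel) \<partial>lborel)"
    by (intro nn_integral_mono pointwise)
  also have "\<dots> = 2 * emeasure lborel S * (\<integral>\<^sup>+ h. K h \<partial>lborel)"
    using S(1) by (intro nn_integral_indicator_kernel) auto
  also have "\<dots> < \<infinity>"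
    using S(2) nn_integral_gagliardo_kernel_finite[of p, where 'a='a] s
    by (simp add: K_def p_def ennreal_mult_less_top less_top)
  finally show ?thesis .
qed

section \<open>A test function\<close>

definition tent :: "'a::euclidean_space \<Rightarrow> real" where
  "tent x = max 0 (1 - norm x)"

lemma tent_nonneg: "0 \<le> tent x"
  and tent_le_one: "tent x \<le> 1"
  and tent_eq_0_iff: "tent x = 0 \<longleftrightarrow> x \<notin> ball 0 1"
  by (auto simp: tent_def)

lemma tent_lipschitz: "\<bar>tent x - tent y\<bar> \<le> norm (x - y)"
proof -
  have "\<bar>tent x - tent y\<bar> \<le> \<bar>norm x - norm y\<bar>"
    unfolding tent_def by (simp add: max_def abs_le_iff) linarith
  also have "\<dots> \<le> norm (x - y)" by (rule norm_triangle_ineq3)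
  finally show ?thesis .
qed

lemma borel_measurable_tent: "tent \<in> borel_measurable (lebesgue :: 'a::euclidean_space measure)"
  unfolding tent_def by (intro measurable_completion) measurable

lemma nn_integral_comp_tent_finite:
  fixes f :: "real \<Rightarrow> real"
  assumes "\<And>t. 0 \<le> t \<Longrightarrow> t \<le> 1 \<Longrightarrow> f t \<le> 1" "f 0 \<le> 0"
  shows "(\<integral>\<^sup>+ x. ennreal (f (tent x)) \<partial>(lebesgue :: 'a::euclidean_space measure)) < \<infinity>"
proof -
  have "ennreal (f (tent x)) \<le> indicator (ball (0::'a) 1) x" for x :: 'a
  proof (cases "x \<in> ball 0 1")
    case True
    then show ?thesis using assms(1)[OF tent_nonneg tent_le_one] by simp
  next
    case False
    then show ?thesis using assms(2) tent_eq_0_iff[of x] by (simp add: ennreal_neg)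
  qed
  then have "(\<integral>\<^sup>+ x. ennreal (f (tent x)) \<partial>(lebesgue :: 'a measure))
               \<le> (\<integral>\<^sup>+ x. indicator (ball (0::'a) 1) x \<partial>lebesgue)"
    by (intro nn_integral_mono)
  also have "\<dots> = emeasure lborel (ball (0::'a) 1)"
    by simp
  also have "\<dots> < \<infinity>"
    by (rule emeasure_lborel_ball_finite)
  finally show ?thesis .
qed

lemma neg_xlogx_le_one:
  fixes y :: real
  assumes "0 \<le> y" "y \<le> 1"
  shows "- (y * ln y) \<le> 1"
proof (cases "y = 0")
  case False
  with assms have y: "y > 0" by simp
  have "- ln y \<le> 1 / y - 1"
    using ln_le_minus_one[of "1 / y"] y by (simp add: ln_div)
  then have "y * (- ln y) \<le> y * (1 / y - 1)"
    using y by (intro mult_left_mono) auto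
  also have "\<dots> = 1 - y"
    using y by (simp add: field_simps)
  finally show ?thesis using y by simp
qed simp

lemma tent_in_Hs:
  assumes "0 < s" "s < 1"
  shows "(tent :: 'a::euclidean_space \<Rightarrow> real) \<in> Hs s"
proof -
  have "(\<integral>\<^sup>+ x. ennreal ((tent x)^2) \<partial>(lebesgue :: 'a measure)) < \<infinity>"
    by (rule nn_integral_comp_tent_finite) (auto simp: power_le_one)
  moreover have "gagliardo s (tent :: 'a \<Rightarrow> real) < \<infinity>"
  proof (rule gagliardo_finite_if_lipschitz[where S = "ball 0 1"])
    show "emeasure lborel (ball (0::'a) 1) < \<infinity>"
      by (rule emeasure_lborel_ball_finite)
    show "tent x = 0" if "x \<notin> ball 0 1" for x :: 'a
      using that by (simp add: tent_eq_0_iff)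
    show "\<bar>tent x - tent y\<bar> \<le> 1" for x y :: 'a
      using tent_nonneg[of x] tent_le_one[of x] tent_nonneg[of y] tent_le_one[of y]
      by (simp add: abs_le_iff)
  qed (use assms tent_lipschitz in auto)
  ultimately show ?thesis
    using borel_measurable_tent by (simp add: Hs_def)
qed

lemma tent_neg_entropy_finite:
  "(\<integral>\<^sup>+ x. ennreal (- ((tent x)^2 * ln ((tent x)^2))) \<partial>(lebesgue :: 'a::euclidean_space measure)) < \<infinity>"
proof (rule nn_integral_comp_tent_finite)
  show "- (t^2 * ln (t^2)) \<le> 1" if "0 \<le> t" "t \<le> 1" for t :: real
    using that by (intro neg_xlogx_le_one) (auto simp: power_le_one)
qed simp

lemma tent_not_AE_zero: "\<not> (AE x in (lebesgue :: 'a::euclidean_space measure). tent x = 0)"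
proof
  assume "AE x in (lebesgue :: 'a measure). tent x = 0"
  then have "AE x in lebesgue. x \<notin> ball (0::'a) 1"
    by eventually_elim (simp add: tent_eq_0_iff)
  then have "emeasure lebesgue (ball (0::'a) 1) = 0"
    by (subst AE_iff_measurable[symmetric, where P = "\<lambda>x. x \<notin> ball 0 1"]) auto
  then show False
    using emeasure_ball[of 1 "0::'a"] unit_ball_vol_pos[of "real DIM('a)"] by simp
qed

section \<open>The least energy level\<close>

lemma INF_ereal_mult_left:
  fixes f :: "'b \<Rightarrow> ereal"
  assumes "c > 0"
  shows "ereal c * (INF i\<in>Y. f i) = (INF i\<in>Y. ereal c * f i)"
proof (cases "Y = {}")
  case False
  have "ereal c * (INF i\<in>Y. f i) = - ((SUP i\<in>Y. - f i) * ereal c)"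
    using ereal_SUP_uminus_eq[of f Y] by (simp add: mult.commute)
  also have "(SUP i\<in>Y. - f i) * ereal c = (SUP i\<in>Y. - f i * ereal c)"
    using False assms by (intro Sup_ereal_mult_right') auto
  also have "- (SUP i\<in>Y. - f i * ereal c) = (INF i\<in>Y. ereal c * f i)"
    using ereal_INF_uminus_eq[of "\<lambda>i. - f i * ereal c" Y] by (simp add: mult.commute)
  finally show ?thesis .
qed (use assms in \<open>simp add: top_ereal_def\<close>)

lemma Clev_eq_INF_ray_sup:
  "Clev TYPE('a::euclidean_space) s lam
     = (INF \<phi> \<in> {\<phi> \<in> Hs s. \<not> (AE x in lebesgue. \<phi> x = 0)}. ray_sup s lam (\<phi> :: 'a \<Rightarrow> real))"
  unfolding Clev_def ray_sup_def ..

lemma Clev_shift: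
  assumes "0 < s"
  shows "Clev TYPE('a::euclidean_space) s lam = ereal (exp lam) * Clev TYPE('a) s 0"
proof -
  have "Clev TYPE('a) s lam
          = (INF \<phi>\<in>{\<phi> \<in> (Hs s :: ('a \<Rightarrow> real) set). \<not> (AE x in lebesgue. \<phi> x = 0)}.
               ereal (exp lam) * ray_sup s 0 \<phi>)"
    unfolding Clev_eq_INF_ray_sup using assms by (intro INF_cong) (auto intro: ray_sup_shift)
  also have "\<dots> = ereal (exp lam) * Clev TYPE('a) s 0"
    unfolding Clev_eq_INF_ray_sup by (simp add: INF_ereal_mult_left)
  finally show ?thesis .
qed

lemma Clev_zero_pos:
  assumes "0 < s"
  shows "0 < Clev TYPE('a::euclidean_space) s 0"
proof -
  have "0 < ereal (exp (- log_sobolev_const (unit_ball_vol DIM('a)) (2 * s / DIM('a))) / 2)"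
    by simp
  also have "\<dots> \<le> Clev TYPE('a) s 0"
    unfolding Clev_eq_INF_ray_sup using assms by (intro INF_greatest) (auto intro: ray_sup_lower_bound)
  finally show ?thesis .
qed

lemma Clev_zero_finite:
  assumes "0 < s" "s < 1"
  shows "Clev TYPE('a::euclidean_space) s 0 < \<infinity>"
proof -
  have "Clev TYPE('a) s 0 \<le> ray_sup s 0 (tent :: 'a \<Rightarrow> real)"
    unfolding Clev_eq_INF_ray_sup using tent_in_Hs[OF assms] tent_not_AE_zero
    by (intro INF_lower) simp
  also have "\<dots> < \<infinity>"
    using ray_sup_finite[OF assms(1) tent_in_Hs[OF assms] tent_not_AE_zero tent_neg_entropy_finite] .
  finally show ?thesis .
qed

theorem proposition3p1:
  fixes s :: real
  assumes "0 < s" and "s < 1"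
  shows "(\<forall>lam > -1. 0 < Clev TYPE('a::euclidean_space) s lam \<and> Clev TYPE('a) s lam < \<infinity>)
       \<and> continuous_on {-1<..} (\<lambda>lam. real_of_ereal (Clev TYPE('a::euclidean_space) s lam))
       \<and> strict_mono_on {-1<..} (Clev TYPE('a::euclidean_space) s)"
proof -
  obtain c where c: "Clev TYPE('a) s 0 = ereal c" "c > 0"
    using Clev_zero_pos[OF assms(1), where 'a='a] Clev_zero_finite[OF assms, where 'a='a]
    by (cases "Clev TYPE('a) s 0") auto
  have C: "Clev TYPE('a) s = (\<lambda>lam. ereal (exp lam * c))"
    using Clev_shift[OF assms(1), where 'a='a] c by auto
  have "continuous_on {-1<..} (\<lambda>lam. exp lam * c)"
    by (intro continuous_intros)
  moreover have "strict_mono_on {-1<..} (\<lambda>lam. ereal (exp lam * c))"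
    using c by (intro strict_mono_onI) simp
  ultimately show ?thesis
    using c by (simp add: C)
qed

end
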